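(* Let $\alpha>-1$, $0\le\gamma<2+\alpha$, $\beta\in\{0,1/3\}$, and let $\sigma$ be a weight on $\mathcal H$. Let $1<p<\frac{2+\alpha}{\gamma}$ (with $\frac{2+\alpha}{\gamma}=\infty$ if $\gamma=0$) and let $q$ satisfy $\frac1p-\frac1q=\frac{\gamma}{2+\alpha}$. Then there is a constant $C=C(p,\alpha,\gamma)$ such that for all $f$, $$\left(\int_{\mathcal H}\big(\mathcal M^{d,\beta}_{\sigma,\alpha,\gamma}f\big)^q\sigma\,dV_\alpha\right)^{1/q}\le C\left(\int_{\mathcal H}|f|^p\sigma\,dV_\alpha\right)^{1/p}.$$
   Context: $\mathcal H=\{x+iy:x\in\mathbb R,\ y>0\}$; for $\alpha>-1$, $dV_\alpha(x+iy)=y^\alpha dx\,dy$. A weight is a nonnegative locally integrable function; $|E|_{\sigma,\alpha}=\int_E\sigma dV_\alpha$. For an interval $I$, $Q_I=\{x+iy:x\in I,0<y<|I|\}$. For $\beta\in\{0,1/3\}$, $\mathcal D^\beta=\{2^j([0,1)+m+(-1)^j\beta): m,j\in\mathbb Z\}$. $\mathcal M^{d,\beta}_{\sigma,\alpha,\gamma}f(z)=\sup_{I\in\mathcal D^\beta,\ z\in Q_I}|Q_I|_{\sigma,\alpha}^{-(1-\frac{\gamma}{2+\alpha})}\int_{Q_I}|f|\sigma\,dV_\alpha$. *)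

theory Defs
  imports "HOL-Analysis.Analysis"
begin

definition UHP :: "complex set" where
  "UHP = {z. 0 < Im z}"

text \<open>Real powers on extended nonnegative reals (used only with positive exponents).\<close>
definition epowr :: "ennreal \<Rightarrow> real \<Rightarrow> ennreal" where
  "epowr x a = (if x = \<infinity> then \<infinity> else ennreal (enn2real x powr a))"

definition wdens :: "real \<Rightarrow> (complex \<Rightarrow> real) \<Rightarrow> complex \<Rightarrow> ennreal" where
  "wdens \<alpha> \<sigma> z = ennreal (\<sigma> z * Im z powr \<alpha>)"

definition weight :: "(complex \<Rightarrow> real) \<Rightarrow> bool" where
  "weight \<sigma> \<longleftrightarrow> \<sigma> \<in> borel_measurable lborel \<and> (\<forall>z\<in>UHP. 0 \<le> \<sigma> z) \<and>
     (\<forall>K. compact K \<and> K \<subseteq> UHP \<longrightarrow> set_integrable lborel K \<sigma>)"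

text \<open>An interval [a,b) is represented by the pair (a,b).  Dyadic grid D^beta.\<close>
definition dyadic :: "real \<Rightarrow> (real \<times> real) set" where
  "dyadic \<beta> = {(2 powi j * (of_int m + (-1) powi j * \<beta>),
                  2 powi j * (of_int m + 1 + (-1) powi j * \<beta>)) | j m :: int. True}"

definition box :: "real \<times> real \<Rightarrow> complex set" where
  "box I = {z. fst I \<le> Re z \<and> Re z < snd I \<and> 0 < Im z \<and> Im z < snd I - fst I}"

definition wmeas :: "real \<Rightarrow> (complex \<Rightarrow> real) \<Rightarrow> complex set \<Rightarrow> ennreal" where
  "wmeas \<alpha> \<sigma> E = (\<integral>\<^sup>+ z\<in>E. wdens \<alpha> \<sigma> z \<partial>lborel)"

text \<open>Dyadic fractional weighted maximal function M^{d,beta}_{sigma,alpha,gamma} f.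
  Convention: a box with |Q_I| = 0 contributes 0 (0/0 = 0 in ennreal).\<close>
definition dmax :: "real \<Rightarrow> (complex \<Rightarrow> real) \<Rightarrow> real \<Rightarrow> real \<Rightarrow> (complex \<Rightarrow> complex) \<Rightarrow> complex \<Rightarrow> ennreal" where
  "dmax \<beta> \<sigma> \<alpha> \<gamma> f z =
     (SUP I \<in> {I \<in> dyadic \<beta>. z \<in> box I}.
        (\<integral>\<^sup>+ w\<in>box I. ennreal (norm (f w)) * wdens \<alpha> \<sigma> w \<partial>lborel)
        / epowr (wmeas \<alpha> \<sigma> (box I)) (1 - \<gamma> / (2 + \<alpha>)))"

end

theory Submission
  imports Defs
begin

text \<open>The argument works for any measure on the Borel sets of the plane and any countable
  family of Carleson boxes that are nested (two boxes are disjoint or one contains the other)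
  and in which every box has only finitely many ancestors of bounded size; both shifted dyadic
  grids are such families. For the ordinary maximal function a covering by maximal boxes gives
  the weak type (1,1) bound, and truncating \<open>g\<close> at the heights \<open>2 ^ j\<close> in a dyadic
  layer-cake decomposition turns it into the strong type (p,p) bound. The fractional maximal
  function is controlled pointwise through Hoelder's inequality on each box: its averages are at
  most \<open>avg(g) powr s * \<parallel>g\<parallel>\<^sub>p powr (1 - s)\<close> with \<open>s = p / q\<close>, so the \<open>q\<close>-th power of the
  fractional maximal function is at most \<open>\<parallel>g\<parallel>\<^sub>p powr (q - p)\<close> times the \<open>p\<close>-th power of the
  ordinary one. Integrals against \<open>\<sigma> dV\<^sub>\<alpha>\<close> over the half-plane are integrals against a density
  measure.\<close>

section \<open>Real powers of extended nonnegative reals\<close>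

lemma epowr_one [simp]: "epowr x 1 = x"
  unfolding epowr_def by (simp add: ennreal_enn2real_if)

lemma epowr_top [simp]: "epowr top a = top"
  unfolding epowr_def by simp

lemma epowr_zero [simp]: "epowr 0 a = 0"
  unfolding epowr_def by simp

lemma epowr_ennreal: "0 \<le> r \<Longrightarrow> epowr (ennreal r) a = ennreal (r powr a)"
  unfolding epowr_def by simp

lemma epowr_mono:
  assumes "x \<le> y" "0 \<le> a"
  shows "epowr x a \<le> epowr y a"
proof (cases y rule: ennreal_cases)
  case (real s)
  with assms(1) obtain r where "x = ennreal r" "0 \<le> r" "r \<le> s"
    by (cases x rule: ennreal_cases) (auto simp: top_unique)
  with real assms(2) show ?thesis by (simp add: epowr_ennreal powr_mono2)
qed simp

lemma epowr_mult_ennreal: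
  assumes "0 < c" "0 < a"
  shows "epowr (x * ennreal c) a = epowr x a * ennreal (c powr a)"
proof (cases x rule: ennreal_cases)
  case (real r)
  with assms show ?thesis
    by (simp add: epowr_ennreal powr_mult flip: ennreal_mult)
qed (use assms in \<open>simp add: ennreal_top_mult\<close>)

lemma epowr_epowr: "epowr (epowr x a) b = epowr x (a * b)"
  by (cases x rule: ennreal_cases) (simp_all add: epowr_ennreal powr_powr)

lemma borel_measurable_epowr [measurable]:
  assumes [measurable]: "f \<in> borel_measurable M"
  shows "(\<lambda>x. epowr (f x) a) \<in> borel_measurable M"
  unfolding epowr_def by measurable

section \<open>Carleson boxes and the shifted dyadic grids\<close>

abbreviation side :: "real \<times> real \<Rightarrow> real" where
  "side I \<equiv> snd I - fst I"

lemma box_sets [measurable]: "box I \<in> sets borel"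
  unfolding box_def by measurable

lemma box_subset_UHP: "box I \<subseteq> UHP"
  unfolding box_def UHP_def by auto

lemma box_subset_box_imp:
  assumes "fst I < snd I" and sub: "box I \<subseteq> box J"
  shows "fst J \<le> fst I" "fst I < snd J" "side I \<le> side J"
proof -
  have left_edge: "Complex (fst I) y \<in> box J" if "0 < y" "y < side I" for y
  proof -
    have "Complex (fst I) y \<in> box I" using that assms(1) by (simp add: box_def)
    then show ?thesis using sub by blast
  qed
  from left_edge[of "side I / 2"] assms(1)
  show "fst J \<le> fst I" "fst I < snd J" by (auto simp: box_def)
  show "side I \<le> side J"
  proof (rule ccontr)
    assume "\<not> side I \<le> side J"
    then have "Complex (fst I) ((max (side J) 0 + side I) / 2) \<in> box J"
      using assms(1) by (intro left_edge) auto
    with \<open>\<not> side I \<le> side J\<close> show False by (auto simp: box_def max_def split: if_splits)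
  qed
qed

definition dyadic_point :: "real \<Rightarrow> int \<Rightarrow> int \<Rightarrow> real" where
  "dyadic_point \<beta> j m = 2 powi j * (of_int m + (-1) powi j * \<beta>)"

lemma dyadic_eq_range:
  "dyadic \<beta> = (\<lambda>(j, m). (dyadic_point \<beta> j m, dyadic_point \<beta> j (m + 1))) ` UNIV"
  unfolding dyadic_def dyadic_point_def by (auto simp: add_ac)

lemma dyadic_point_less_iff [simp]: "dyadic_point \<beta> j m < dyadic_point \<beta> j n \<longleftrightarrow> m < n"
  unfolding dyadic_point_def by simp

lemma dyadic_point_le_iff [simp]: "dyadic_point \<beta> j m \<le> dyadic_point \<beta> j n \<longleftrightarrow> m \<le> n"
  unfolding dyadic_point_def by simp

lemma side_dyadic_interval: "dyadic_point \<beta> j (m + 1) - dyadic_point \<beta> j m = 2 powi j"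
  unfolding dyadic_point_def by (simp add: algebra_simps)

lemma neg_two_power_mod_three: "(-2::int) ^ d mod 3 = 1"
proof -
  have "(-2::int) ^ d mod 3 = ((-2) mod 3) ^ d mod 3" by (rule power_mod[symmetric])
  also have "(-2::int) mod 3 = 1" by simp
  finally show ?thesis by simp
qed

text \<open>For \<open>\<beta> = 1/3\<close> the grids are nested because \<open>(-2)^d \<equiv> 1 (mod 3)\<close>.\<close>
lemma dyadic_point_refine:
  assumes \<beta>: "\<beta> = 0 \<or> \<beta> = 1/3" and "i \<le> j"
  obtains m' where "dyadic_point \<beta> j m = dyadic_point \<beta> i m'"
proof -
  obtain d where j: "j = i + int d" using \<open>i \<le> j\<close> by (metis zle_iff_zadd)
  define k where "k = (-2::int) ^ d div 3"
  have "(-2::int) ^ d = 3 * k + 1"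
    unfolding k_def using div_mult_mod_eq[of "(-2::int) ^ d" 3] neg_two_power_mod_three by simp
  then have k: "(-2::real) ^ d = 3 * of_int k + 1"
    by (metis of_int_numeral of_int_minus of_int_power of_int_add of_int_mult of_int_1)
  define e :: int where "e = (if even i then 1 else -1)"
  have e: "(-1::real) powi i = of_int e" by (simp add: e_def power_int_minus_left)
  have "(-1::real) ^ d * 2 ^ d = (-2) ^ d" by (simp flip: power_mult_distrib)
  then have expand: "dyadic_point \<beta> j m = 2 powi i * (2 ^ d * of_int m + (-1) powi i * (-2) ^ d * \<beta>)"
    unfolding dyadic_point_def j by (simp add: power_int_add power_int_of_nat algebra_simps)
  from \<beta> show thesis
  proof
    assume "\<beta> = 0"
    then show thesis using expand by (intro that[of "2 ^ d * m"]) (simp add: dyadic_point_def)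
  next
    assume "\<beta> = 1/3"
    then show thesis using expand
      by (intro that[of "2 ^ d * m + e * k"]) (simp add: dyadic_point_def k e algebra_simps)
  qed
qed

lemma dyadic_box_subset:
  assumes \<beta>: "\<beta> = 0 \<or> \<beta> = 1/3" and "i \<le> j"
    and meet: "box (dyadic_point \<beta> i m, dyadic_point \<beta> i (m + 1))
             \<inter> box (dyadic_point \<beta> j n, dyadic_point \<beta> j (n + 1)) \<noteq> {}"
  shows "box (dyadic_point \<beta> i m, dyadic_point \<beta> i (m + 1))
      \<subseteq> box (dyadic_point \<beta> j n, dyadic_point \<beta> j (n + 1))"
proof -
  obtain a where a: "dyadic_point \<beta> j n = dyadic_point \<beta> i a"
    using dyadic_point_refine[OF assms(1,2)] by blast
  obtain b where b: "dyadic_point \<beta> j (n + 1) = dyadic_point \<beta> i b"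
    using dyadic_point_refine[OF assms(1,2)] by blast
  from meet obtain z where "dyadic_point \<beta> i a \<le> Re z" "Re z < dyadic_point \<beta> i (m + 1)"
    "dyadic_point \<beta> i m \<le> Re z" "Re z < dyadic_point \<beta> i b"
    by (auto simp: box_def a b)
  then have "a < m + 1" "m < b"
    using dyadic_point_less_iff by (meson le_less_trans)+
  then have ends: "dyadic_point \<beta> j n \<le> dyadic_point \<beta> i m"
    "dyadic_point \<beta> i (m + 1) \<le> dyadic_point \<beta> j (n + 1)"
    by (simp_all add: a b)
  have "(2::real) powi i \<le> 2 powi j"
    using \<open>i \<le> j\<close> by (simp add: power_int_increasing)
  with ends show ?thesis
    by (auto simp: box_def side_dyadic_interval)
qed

lemma dyadic_boxes_nested:
  assumes "\<beta> = 0 \<or> \<beta> = 1/3" and "I \<in> dyadic \<beta>" "J \<in> dyadic \<beta>" and "box I \<inter> box J \<noteq> {}"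
  shows "box I \<subseteq> box J \<or> box J \<subseteq> box I"
proof -
  obtain i m j n where IJ: "I = (dyadic_point \<beta> i m, dyadic_point \<beta> i (m + 1))"
    "J = (dyadic_point \<beta> j n, dyadic_point \<beta> j (n + 1))"
    using assms(2,3) unfolding dyadic_eq_range by auto
  show ?thesis
  proof (cases "i \<le> j")
    case True
    then show ?thesis using dyadic_box_subset[OF assms(1)] assms(4) IJ by blast
  next
    case False
    then show ?thesis using dyadic_box_subset[OF assms(1), of j i] assms(4) IJ
      by (simp add: Int_commute)
  qed
qed

lemma finite_dyadic_indices_containing:
  "finite {k. dyadic_point \<beta> j k \<le> x \<and> x < dyadic_point \<beta> j (k + 1)}"
proof (cases "{k. dyadic_point \<beta> j k \<le> x \<and> x < dyadic_point \<beta> j (k + 1)} = {}")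
  case False
  then obtain k where k: "dyadic_point \<beta> j k \<le> x" "x < dyadic_point \<beta> j (k + 1)" by blast
  have "{k. dyadic_point \<beta> j k \<le> x \<and> x < dyadic_point \<beta> j (k + 1)} \<subseteq> {k}"
  proof safe
    fix l assume "dyadic_point \<beta> j l \<le> x" "x < dyadic_point \<beta> j (l + 1)"
    with k have "l < k + 1" "k < l + 1"
      using dyadic_point_less_iff by (meson le_less_trans)+
    then show "l = k" by simp
  qed
  then show ?thesis by (rule finite_subset) simp
next
  case True
  then show ?thesis by (metis finite.emptyI)
qed

lemma finite_dyadic_ancestors:
  assumes "I \<in> dyadic \<beta>"
  shows "finite {J \<in> dyadic \<beta>. box I \<subseteq> box J \<and> side J \<le> 2 ^ N}"
proof -
  obtain i m where I: "I = (dyadic_point \<beta> i m, dyadic_point \<beta> i (m + 1))"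
    using assms unfolding dyadic_eq_range by auto
  define x where "x = fst I"
  define T where "T = (SIGMA j:{i..int N}. {k. dyadic_point \<beta> j k \<le> x \<and> x < dyadic_point \<beta> j (k + 1)})"
  have "finite T"
    unfolding T_def by (intro finite_SigmaI finite_dyadic_indices_containing) simp
  moreover have "{J \<in> dyadic \<beta>. box I \<subseteq> box J \<and> side J \<le> 2 ^ N}
      \<subseteq> (\<lambda>(j, k). (dyadic_point \<beta> j k, dyadic_point \<beta> j (k + 1))) ` T"
  proof safe
    fix J assume J: "J \<in> dyadic \<beta>" "box I \<subseteq> box J" "side J \<le> 2 ^ N"
    then obtain j k where Jjk: "J = (dyadic_point \<beta> j k, dyadic_point \<beta> j (k + 1))"
      unfolding dyadic_eq_range by auto
    have "fst I < snd I" using I by simp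
    note sub = box_subset_box_imp[OF this J(2)]
    have "(2::real) powi i \<le> 2 powi j"
      using sub(3) by (simp add: I Jjk side_dyadic_interval)
    then have "i \<le> j"
      using power_int_strict_increasing[of j i "2::real"] by linarith
    have "(2::real) powi j \<le> 2 powi int N"
      using J(3) by (simp add: Jjk side_dyadic_interval power_int_of_nat)
    then have "j \<le> int N"
      using power_int_strict_increasing[of "int N" j "2::real"] by linarith
    with \<open>i \<le> j\<close> sub(1,2) have "(j, k) \<in> T"
      by (simp add: T_def x_def Jjk)
    then show "J \<in> (\<lambda>(j, k). (dyadic_point \<beta> j k, dyadic_point \<beta> j (k + 1))) ` T"
      using Jjk by force
  qed
  ultimately show ?thesis by (rule finite_surj)
qed

text \<open>The finiteness condition guarantees that every box of a family of boxes of bounded size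
  lies in a maximal one.\<close>
definition nested_grid :: "(real \<times> real) set \<Rightarrow> bool" where
  "nested_grid D \<longleftrightarrow> countable D \<and>
     (\<forall>I\<in>D. \<forall>J\<in>D. box I \<inter> box J \<noteq> {} \<longrightarrow> box I \<subseteq> box J \<or> box J \<subseteq> box I) \<and>
     (\<forall>I\<in>D. \<forall>N::nat. finite {J\<in>D. box I \<subseteq> box J \<and> side J \<le> 2 ^ N})"

lemma nested_grid_dyadic:
  assumes "\<beta> = 0 \<or> \<beta> = 1/3"
  shows "nested_grid (dyadic \<beta>)"
  unfolding nested_grid_def
  using dyadic_boxes_nested[OF assms] finite_dyadic_ancestors
  by (auto simp: dyadic_eq_range)

section \<open>Maximal functions over nested grids\<close>

definition box_average :: "complex measure \<Rightarrow> real \<Rightarrow> (complex \<Rightarrow> ennreal) \<Rightarrow> real \<times> real \<Rightarrow> ennreal"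
  where "box_average M e h I = (\<integral>\<^sup>+x\<in>box I. h x \<partial>M) / epowr (emeasure M (box I)) e"

definition grid_maximal ::
    "(real \<times> real) set \<Rightarrow> complex measure \<Rightarrow> real \<Rightarrow> (complex \<Rightarrow> ennreal) \<Rightarrow> complex \<Rightarrow> ennreal"
  where "grid_maximal D M e h z = (SUP I\<in>{I\<in>D. z \<in> box I}. box_average M e h I)"

lemma grid_maximal_eq_SUP_indicator:
  "grid_maximal D M e h z = (SUP I\<in>D. box_average M e h I * indicator (box I) z)"
  unfolding grid_maximal_def
proof (rule antisym; rule SUP_least)
  fix I assume "I \<in> {I \<in> D. z \<in> box I}"
  then show "box_average M e h I \<le> (SUP I\<in>D. box_average M e h I * indicator (box I) z)"
    by (intro SUP_upper2[of I]) simp_all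
next
  fix I assume "I \<in> D"
  then show "box_average M e h I * indicator (box I) z \<le> (SUP I\<in>{I \<in> D. z \<in> box I}. box_average M e h I)"
    by (cases "z \<in> box I") (simp_all add: SUP_upper)
qed

lemma borel_measurable_grid_maximal:
  assumes "countable D" "sets N = sets borel"
  shows "grid_maximal D M e h \<in> borel_measurable N"
  unfolding grid_maximal_eq_SUP_indicator[abs_def] measurable_cong_sets[OF assms(2) refl]
  by (rule borel_measurable_SUP[OF assms(1)]) simp

lemma nested_grid_maximal_box:
  assumes grid: "nested_grid D" and "G \<subseteq> D" and sides: "\<And>I. I \<in> G \<Longrightarrow> side I \<le> 2 ^ N"
    and "I \<in> G"
  obtains J where "J \<in> G" "box I \<subseteq> box J" "\<And>J'. J' \<in> G \<Longrightarrow> box J \<subseteq> box J' \<Longrightarrow> box J' = box J"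
proof -
  define S where "S = box ` {J\<in>G. box I \<subseteq> box J}"
  have "S \<subseteq> box ` {J\<in>D. box I \<subseteq> box J \<and> side J \<le> 2 ^ N}"
    unfolding S_def using \<open>G \<subseteq> D\<close> sides by auto
  moreover have "finite {J\<in>D. box I \<subseteq> box J \<and> side J \<le> 2 ^ N}"
    using grid \<open>I \<in> G\<close> \<open>G \<subseteq> D\<close> unfolding nested_grid_def by auto
  ultimately have "finite S" by (meson finite_imageI finite_subset)
  moreover have "box I \<in> S" unfolding S_def using \<open>I \<in> G\<close> by auto
  ultimately obtain T where "T \<in> S" "box I \<subseteq> T" and T_max: "\<And>T'. T' \<in> S \<Longrightarrow> T \<subseteq> T' \<Longrightarrow> T = T'"
    using finite_has_maximal2[of S "box I"] by blast
  then obtain J where J: "J \<in> G" "box I \<subseteq> box J" "T = box J" unfolding S_def by auto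
  show thesis
  proof (rule that[OF J(1,2)])
    fix J' assume "J' \<in> G" "box J \<subseteq> box J'"
    with J(2) have "box J' \<in> S" unfolding S_def by auto
    with T_max J(3) \<open>box J \<subseteq> box J'\<close> show "box J' = box J" by blast
  qed
qed

lemma nested_grid_maximal_boxes:
  assumes grid: "nested_grid D" and "G \<subseteq> D" and sides: "\<And>I. I \<in> G \<Longrightarrow> side I \<le> 2 ^ N"
  obtains B where "B \<subseteq> box ` G" "\<Union>B = \<Union>(box ` G)" "disjoint_family_on id B"
proof
  define G' where "G' = {I\<in>G. \<forall>J\<in>G. box I \<subseteq> box J \<longrightarrow> box J = box I}"
  have "G' \<subseteq> G" unfolding G'_def by blast
  then show "box ` G' \<subseteq> box ` G" by blast
  have maximal: "box J = box I" if "I \<in> G'" "J \<in> G" "box I \<subseteq> box J" for I J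
    using that unfolding G'_def by blast
  have "\<exists>J\<in>G'. box I \<subseteq> box J" if I: "I \<in> G" for I
  proof -
    obtain J where "J \<in> G" "box I \<subseteq> box J" "\<And>J'. J' \<in> G \<Longrightarrow> box J \<subseteq> box J' \<Longrightarrow> box J' = box J"
      using nested_grid_maximal_box[OF grid \<open>G \<subseteq> D\<close> sides I] by blast
    then show ?thesis unfolding G'_def by blast
  qed
  then show "\<Union>(box ` G') = \<Union>(box ` G)"
    unfolding G'_def by blast
  show "disjoint_family_on id (box ` G')"
    unfolding disjoint_family_on_def
  proof (intro ballI impI)
    fix A B assume "A \<in> box ` G'" "B \<in> box ` G'" "A \<noteq> B"
    then obtain I J where IJ: "I \<in> G'" "J \<in> G'" "A = box I" "B = box J" by auto
    show "id A \<inter> id B = {}"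
    proof (rule ccontr)
      assume "id A \<inter> id B \<noteq> {}"
      then have "box I \<inter> box J \<noteq> {}" using IJ by simp
      moreover have "I \<in> G" "J \<in> G" using IJ \<open>G' \<subseteq> G\<close> by auto
      moreover have "\<forall>I\<in>D. \<forall>J\<in>D. box I \<inter> box J \<noteq> {} \<longrightarrow> box I \<subseteq> box J \<or> box J \<subseteq> box I"
        using grid unfolding nested_grid_def by blast
      ultimately have "box I \<subseteq> box J \<or> box J \<subseteq> box I"
        using \<open>G \<subseteq> D\<close> by blast
      then have "box I = box J"
        using maximal[OF IJ(1) \<open>J \<in> G\<close>] maximal[OF IJ(2) \<open>I \<in> G\<close>] by blast
      then show False using \<open>A \<noteq> B\<close> IJ by simp
    qed
  qed
qed

lemma emeasure_disjoint_Union_le: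
  assumes "countable B" "disjoint_family_on id B" "B \<subseteq> sets M" "h \<in> borel_measurable M"
    and local_bound: "\<And>S. S \<in> B \<Longrightarrow> l * emeasure M S \<le> (\<integral>\<^sup>+x\<in>S. h x \<partial>M)"
  shows "l * emeasure M (\<Union>B) \<le> (\<integral>\<^sup>+x. h x \<partial>M)"
proof -
  have union_density: "emeasure (density M h) (\<Union>B) = (\<integral>\<^sup>+S. emeasure (density M h) S \<partial>count_space B)"
    using emeasure_UN_countable[OF _ assms(1,2), of "density M h"] assms(3) by (simp add: subset_eq)
  have "l * emeasure M (\<Union>B) = l * (\<integral>\<^sup>+S. emeasure M S \<partial>count_space B)"
    using emeasure_UN_countable[OF _ assms(1,2), of M] assms(3) by (simp add: subset_eq)
  also have "\<dots> = (\<integral>\<^sup>+S. l * emeasure M S \<partial>count_space B)"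
    by (simp add: nn_integral_cmult)
  also have "\<dots> \<le> (\<integral>\<^sup>+S. emeasure (density M h) S \<partial>count_space B)"
    using local_bound assms(3,4) by (intro nn_integral_mono) (auto simp: emeasure_density)
  also have "\<dots> = (\<integral>\<^sup>+x\<in>\<Union>B. h x \<partial>M)"
    using union_density assms(1,3,4) by (simp add: emeasure_density sets.countable_Union)
  also have "\<dots> \<le> (\<integral>\<^sup>+x. h x \<partial>M)"
    by (intro nn_integral_mono) (simp add: indicator_def)
  finally show ?thesis .
qed

lemma emeasure_Union_bounded_grid_boxes_le:
  assumes grid: "nested_grid D" and sets_M: "sets M = sets borel" and h: "h \<in> borel_measurable M"
    and "G \<subseteq> D" and sides: "\<And>I. I \<in> G \<Longrightarrow> side I \<le> 2 ^ N"
    and local_bound: "\<And>I. I \<in> G \<Longrightarrow> l * emeasure M (box I) \<le> (\<integral>\<^sup>+x\<in>box I. h x \<partial>M)"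
  shows "l * emeasure M (\<Union>(box ` G)) \<le> (\<integral>\<^sup>+x. h x \<partial>M)"
proof -
  obtain B where B: "B \<subseteq> box ` G" "\<Union>B = \<Union>(box ` G)" "disjoint_family_on id B"
    by (rule nested_grid_maximal_boxes[OF grid \<open>G \<subseteq> D\<close> sides])
  have "countable G"
    using grid countable_subset[OF \<open>G \<subseteq> D\<close>] unfolding nested_grid_def by blast
  then have "countable B" using countable_subset[OF B(1)] by blast
  moreover have "B \<subseteq> sets M" using B(1) sets_M by auto
  moreover have "l * emeasure M S \<le> (\<integral>\<^sup>+x\<in>S. h x \<partial>M)" if "S \<in> B" for S
    using that B(1) local_bound by blast
  ultimately have "l * emeasure M (\<Union>B) \<le> (\<integral>\<^sup>+x. h x \<partial>M)"
    by (rule emeasure_disjoint_Union_le[OF _ B(3) _ h])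
  then show ?thesis unfolding B(2) .
qed

lemma emeasure_Union_grid_boxes_le:
  assumes grid: "nested_grid D" and sets_M: "sets M = sets borel" and h: "h \<in> borel_measurable M"
    and "G \<subseteq> D" and local_bound: "\<And>I. I \<in> G \<Longrightarrow> l * emeasure M (box I) \<le> (\<integral>\<^sup>+x\<in>box I. h x \<partial>M)"
  shows "l * emeasure M (\<Union>(box ` G)) \<le> (\<integral>\<^sup>+x. h x \<partial>M)"
proof -
  define G_le where "G_le N = {I\<in>G. side I \<le> 2 ^ N}" for N :: nat
  define U where "U N = \<Union>(box ` G_le N)" for N
  have "countable G"
    using grid countable_subset[OF \<open>G \<subseteq> D\<close>] unfolding nested_grid_def by blast
  then have "countable (G_le N)" for N
    unfolding G_le_def by (rule countable_subset[rotated]) blast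
  then have U_sets: "U N \<in> sets M" for N
    unfolding U_def by (intro sets.countable_UN') (auto simp: sets_M)
  have level_bound: "l * emeasure M (U N) \<le> (\<integral>\<^sup>+x. h x \<partial>M)" for N
    unfolding U_def using \<open>G \<subseteq> D\<close> local_bound
    by (intro emeasure_Union_bounded_grid_boxes_le[OF grid sets_M h]) (auto simp: G_le_def)
  have "incseq U"
  proof (rule incseq_SucI)
    fix N
    have "(2::real) ^ N \<le> 2 ^ Suc N" by simp
    then have "G_le N \<subseteq> G_le (Suc N)" unfolding G_le_def using order_trans by blast
    then show "U N \<subseteq> U (Suc N)" unfolding U_def by blast
  qed
  moreover have "(\<Union>N. U N) = \<Union>(box ` G)"
  proof
    show "\<Union>(box ` G) \<subseteq> (\<Union>N. U N)"
    proof
      fix z assume "z \<in> \<Union>(box ` G)"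
      then obtain I where "I \<in> G" "z \<in> box I" by blast
      moreover obtain N where "side I < 2 ^ N" using real_arch_pow[of 2 "side I"] by auto
      ultimately have "I \<in> G_le N" by (simp add: G_le_def)
      with \<open>z \<in> box I\<close> show "z \<in> (\<Union>N. U N)" unfolding U_def by blast
    qed
  qed (auto simp: U_def G_le_def)
  moreover have "(SUP N. emeasure M (U N)) = emeasure M (\<Union>N. U N)"
    using U_sets \<open>incseq U\<close> by (intro SUP_emeasure_incseq) auto
  ultimately have "l * emeasure M (\<Union>(box ` G)) = l * (SUP N. emeasure M (U N))"
    by simp
  also have "\<dots> = (SUP N. l * emeasure M (U N))"
    by (rule SUP_mult_left_ennreal)
  also have "\<dots> \<le> (\<integral>\<^sup>+x. h x \<partial>M)"
    by (rule SUP_least) (rule level_bound)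
  finally show ?thesis .
qed

lemma mult_le_if_less_divide_ennreal:
  assumes "(l::ennreal) < a / m"
  shows "l * m \<le> a"
proof (cases "m = 0 \<or> m = top")
  case False
  from assms have "l * m \<le> a / m * m" by (simp add: mult_right_mono)
  also have "\<dots> = a" using False by (simp add: ennreal_divide_times top.not_eq_extremum)
  finally show ?thesis .
qed (use assms in auto)

lemma grid_maximal_weak_type:
  assumes "nested_grid D" "sets M = sets borel" "h \<in> borel_measurable M"
  shows "l * emeasure M {z. l < grid_maximal D M 1 h z} \<le> (\<integral>\<^sup>+x. h x \<partial>M)"
proof -
  define G where "G = {I\<in>D. l < box_average M 1 h I}"
  have level_set: "{z. l < grid_maximal D M 1 h z} = \<Union>(box ` G)"
    unfolding G_def grid_maximal_def less_SUP_iff by blast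
  have "l * emeasure M (box I) \<le> (\<integral>\<^sup>+x\<in>box I. h x \<partial>M)" if "I \<in> G" for I
  proof -
    have "l < (\<integral>\<^sup>+x\<in>box I. h x \<partial>M) / emeasure M (box I)"
      using that unfolding G_def box_average_def by simp
    then show ?thesis by (rule mult_le_if_less_divide_ennreal)
  qed
  moreover have "G \<subseteq> D" unfolding G_def by blast
  ultimately have "l * emeasure M (\<Union>(box ` G)) \<le> (\<integral>\<^sup>+x. h x \<partial>M)"
    using emeasure_Union_grid_boxes_le[OF assms] by blast
  then show ?thesis unfolding level_set .
qed

lemma mult_divide_le_ennreal: "t * m / m \<le> (t::ennreal)"
proof (cases "m = 0 \<or> m = top")
  case False
  then show ?thesis by (simp add: ennreal_times_divide[symmetric] top.not_eq_extremum)
qed (auto simp: ennreal_times_divide[symmetric])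

lemma Collect_less_sets:
  fixes f :: "'a::topological_space \<Rightarrow> ennreal"
  assumes "sets M = sets borel" "f \<in> borel_measurable M"
  shows "{z. a < f z} \<in> sets M"
proof -
  have "f -` {a<..} \<inter> space M \<in> sets M" by (rule measurable_sets[OF assms(2)]) simp
  moreover have "space M = UNIV" using sets_eq_imp_space_eq[OF assms(1)] by simp
  ultimately show ?thesis by (simp add: vimage_def)
qed

lemma grid_maximal_le_truncated:
  assumes sets_M: "sets M = sets borel" and h [measurable]: "h \<in> borel_measurable M"
  shows "grid_maximal D M 1 h z \<le> grid_maximal D M 1 (\<lambda>x. h x * indicator {x. t < h x} x) z + t"
  unfolding grid_maximal_def[of D M 1 h]
proof (rule SUP_least)
  fix I assume I: "I \<in> {I \<in> D. z \<in> box I}"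
  let ?high = "\<lambda>x. h x * indicator {x. t < h x} x" and ?low = "\<lambda>x. h x * indicator {x. h x \<le> t} x"
  define Q where "Q = box I"
  have Q [measurable]: "Q \<in> sets M" unfolding Q_def sets_M by simp
  have "(\<integral>\<^sup>+x\<in>Q. h x \<partial>M) = (\<integral>\<^sup>+x. ?high x * indicator Q x + ?low x * indicator Q x \<partial>M)"
    by (intro nn_integral_cong) (auto simp: indicator_def not_less)
  also have "\<dots> = (\<integral>\<^sup>+x\<in>Q. ?high x \<partial>M) + (\<integral>\<^sup>+x\<in>Q. ?low x \<partial>M)"
    by (rule nn_integral_add) measurable
  finally have split: "(\<integral>\<^sup>+x\<in>Q. h x \<partial>M) = (\<integral>\<^sup>+x\<in>Q. ?high x \<partial>M) + (\<integral>\<^sup>+x\<in>Q. ?low x \<partial>M)" .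
  have "(\<integral>\<^sup>+x\<in>Q. ?low x \<partial>M) \<le> (\<integral>\<^sup>+x. t * indicator Q x \<partial>M)"
    by (intro nn_integral_mono) (simp add: indicator_def)
  also have "\<dots> = t * emeasure M Q" using Q by (rule nn_integral_cmult_indicator)
  finally have "(\<integral>\<^sup>+x\<in>Q. ?low x \<partial>M) / emeasure M Q \<le> t * emeasure M Q / emeasure M Q"
    by (rule divide_right_mono_ennreal)
  also have "\<dots> \<le> t" by (rule mult_divide_le_ennreal)
  finally have low: "(\<integral>\<^sup>+x\<in>Q. ?low x \<partial>M) / emeasure M Q \<le> t" .
  have "box_average M 1 h I = box_average M 1 ?high I + (\<integral>\<^sup>+x\<in>Q. ?low x \<partial>M) / emeasure M Q"
    unfolding box_average_def epowr_one Q_def[symmetric] split by (rule add_divide_distrib_ennreal)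
  also have "\<dots> \<le> grid_maximal D M 1 ?high z + t"
    using I low unfolding grid_maximal_def by (intro add_mono SUP_upper) auto
  finally show "box_average M 1 h I \<le> grid_maximal D M 1 ?high z + t" .
qed

lemma grid_maximal_level_set_le:
  assumes grid: "nested_grid D" and sets_M: "sets M = sets borel" and h [measurable]: "h \<in> borel_measurable M"
  shows "t * emeasure M {z. 2 * t < grid_maximal D M 1 h z}
    \<le> (\<integral>\<^sup>+x. h x * indicator {x. t < h x} x \<partial>M)"
proof -
  let ?high = "\<lambda>x. h x * indicator {x. t < h x} x"
  have countable: "countable D" using grid unfolding nested_grid_def by blast
  have "{z. 2 * t < grid_maximal D M 1 h z} \<subseteq> {z. t < grid_maximal D M 1 ?high z}"
  proof safe
    fix z assume "2 * t < grid_maximal D M 1 h z"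
    also have "\<dots> \<le> grid_maximal D M 1 ?high z + t"
      by (rule grid_maximal_le_truncated[OF sets_M h])
    finally have less: "2 * t < grid_maximal D M 1 ?high z + t" .
    show "t < grid_maximal D M 1 ?high z"
    proof (rule ccontr)
      assume "\<not> t < grid_maximal D M 1 ?high z"
      then have "grid_maximal D M 1 ?high z + t \<le> 2 * t" by (simp add: mult_2 add_right_mono)
      with less show False by simp
    qed
  qed
  then have "t * emeasure M {z. 2 * t < grid_maximal D M 1 h z}
      \<le> t * emeasure M {z. t < grid_maximal D M 1 ?high z}"
    using Collect_less_sets[OF sets_M borel_measurable_grid_maximal[OF countable sets_M]]
    by (intro mult_left_mono emeasure_mono) auto
  also have "\<dots> \<le> (\<integral>\<^sup>+x. ?high x \<partial>M)"
    by (rule grid_maximal_weak_type[OF grid sets_M]) measurable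
  finally show ?thesis .
qed

section \<open>Strong type by dyadic layers\<close>

lemma two_times_ennreal: "0 \<le> a \<Longrightarrow> 2 * ennreal a = ennreal (2 * a)"
  by (simp add: ennreal_mult)

lemma dyadic_layer_below:
  fixes r p :: real
  assumes "0 < r" "0 < p"
  obtains j :: int where "2 * 2 powr of_int j < r" "r powr p \<le> 4 powr p * 2 powr (of_int j * p)"
proof -
  define j where "j = \<lceil>log 2 r\<rceil> - 2"
  have "of_int j + 1 < log 2 r" unfolding j_def by linarith
  then have "2 powr (of_int j + 1) < r"
    using \<open>0 < r\<close> by (simp add: less_log_iff)
  then have below: "2 * 2 powr of_int j < r" by (simp add: powr_add mult.commute)
  have "log 2 r \<le> of_int j + 2" unfolding j_def by linarith
  then have "r \<le> 2 powr (of_int j + 2)"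
    using \<open>0 < r\<close> powr_mono[of "log 2 r" "of_int j + 2" 2] by simp
  then have "r powr p \<le> (4 * 2 powr of_int j) powr p"
    using assms by (intro powr_mono2) (simp_all add: powr_add)
  also have "\<dots> = 4 powr p * 2 powr (of_int j * p)"
    by (simp add: powr_mult powr_powr)
  finally show thesis by (rule that[OF below])
qed

lemma epowr_le_dyadic_layers:
  fixes x :: ennreal
  assumes "0 < p"
  shows "epowr x p \<le> ennreal (4 powr p) *
    (\<integral>\<^sup>+j. ennreal (2 powr (of_int j * p)) * indicator {j. 2 * ennreal (2 powr of_int j) < x} j \<partial>count_space UNIV)"
    (is "_ \<le> _ * ?S")
proof (cases x rule: ennreal_cases)
  case top
  have "emeasure (count_space UNIV) {0::int..} = \<infinity>"
    by (simp add: infinite_Ici)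
  then have "\<infinity> = (\<integral>\<^sup>+j. indicator {0::int..} j \<partial>count_space UNIV)"
    by simp
  also have "\<dots> \<le> ?S"
    using top assms
    by (intro nn_integral_mono) (auto simp: indicator_def ge_one_powr_ge_zero two_times_ennreal)
  finally show ?thesis using top by (simp add: top_unique ennreal_mult_top)
next
  case (real r)
  show ?thesis
  proof (cases "r = 0")
    case False
    with real have "0 < r" by simp
    then obtain j where j: "2 * 2 powr of_int j < r" "r powr p \<le> 4 powr p * 2 powr (of_int j * p)"
      using dyadic_layer_below assms by blast
    then have "2 * ennreal (2 powr of_int j) < x"
      using real by (simp add: two_times_ennreal ennreal_less_iff)
    then have "ennreal (2 powr (of_int j * p)) \<le> ?S"
      using nn_integral_ge_point[of j UNIV
          "\<lambda>j. ennreal (2 powr (of_int j * p)) * indicator {j. 2 * ennreal (2 powr of_int j) < x} j"]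
      by simp
    moreover have "epowr x p \<le> ennreal (4 powr p) * ennreal (2 powr (of_int j * p))"
      using real j(2) by (simp add: epowr_ennreal ennreal_leI flip: ennreal_mult)
    ultimately show ?thesis by (meson mult_left_mono order_trans zero_le)
  qed (use real assms in \<open>simp add: epowr_ennreal\<close>)
qed

lemma nn_integral_two_powr_atMost:
  assumes "0 < s"
  shows "(\<integral>\<^sup>+j. ennreal (2 powr (of_int j * s)) * indicator {..J} j \<partial>count_space UNIV)
     = ennreal (2 powr (of_int J * s) / (1 - 2 powr (-s)))"
proof -
  have ratio: "norm ((2::real) powr (-s)) < 1" using assms powr_less_mono[of "-s" 0 "2::real"] by simp
  have "(\<integral>\<^sup>+j. ennreal (2 powr (of_int j * s)) * indicator {..J} j \<partial>count_space UNIV)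
      = (\<integral>\<^sup>+j. ennreal (2 powr (of_int j * s)) \<partial>count_space {..J})"
    by (simp add: nn_integral_count_space_indicator)
  also have "\<dots> = (\<integral>\<^sup>+n. ennreal (2 powr (of_int (J - int n) * s)) \<partial>count_space UNIV)"
  proof (rule nn_integral_bij_count_space[symmetric])
    show "bij_betw (\<lambda>n. J - int n) UNIV {..J}"
      by (rule bij_betwI[where g = "\<lambda>j. nat (J - j)"]) auto
  qed
  also have "\<dots> = (\<Sum>n. ennreal (2 powr (of_int J * s) * (2 powr (-s)) ^ n))"
    by (simp add: nn_integral_count_space_nat powr_realpow[symmetric] powr_powr
        flip: powr_add) (simp add: algebra_simps)
  also have "\<dots> = ennreal (2 powr (of_int J * s) / (1 - 2 powr (-s)))"
    using sums_mult[OF geometric_sums[OF ratio], of "2 powr (of_int J * s)"]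
    by (intro suminf_ennreal_eq) (simp_all add: divide_inverse)
  finally show ?thesis .
qed

lemma dyadic_layers_below_le:
  assumes "0 < r" "0 < s"
  shows "(\<integral>\<^sup>+j. ennreal (2 powr (of_int j * s)) * indicator {j. 2 powr of_int j < r} j \<partial>count_space UNIV)
    \<le> ennreal (r powr s / (1 - 2 powr (-s)))"
proof -
  define J where "J = \<lceil>log 2 r\<rceil> - 1"
  have "of_int J < log 2 r" unfolding J_def by linarith
  then have J: "2 powr of_int J < r"
    using \<open>0 < r\<close> by (simp add: less_log_iff)
  have "j \<le> J" if "2 powr of_int j < r" for j
  proof -
    have "of_int j < log 2 r" using that \<open>0 < r\<close> by (simp add: less_log_iff)
    then show ?thesis unfolding J_def by linarith
  qed
  then have "(\<integral>\<^sup>+j. ennreal (2 powr (of_int j * s)) * indicator {j. 2 powr of_int j < r} j \<partial>count_space UNIV)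
      \<le> (\<integral>\<^sup>+j. ennreal (2 powr (of_int j * s)) * indicator {..J} j \<partial>count_space UNIV)"
    by (intro nn_integral_mono) (auto simp: indicator_def)
  also have "\<dots> = ennreal (2 powr (of_int J * s) / (1 - 2 powr (-s)))"
    by (rule nn_integral_two_powr_atMost[OF assms(2)])
  also have "\<dots> \<le> ennreal (r powr s / (1 - 2 powr (-s)))"
  proof (intro ennreal_leI divide_right_mono)
    have "2 powr (of_int J * s) = (2 powr of_int J) powr s" by (simp add: powr_powr)
    also have "\<dots> \<le> r powr s" using J assms by (intro powr_mono2) auto
    finally show "2 powr (of_int J * s) \<le> r powr s" .
    show "0 \<le> 1 - 2 powr (-s)" using assms powr_less_mono[of "-s" 0 "2::real"] by simp
  qed
  finally show ?thesis .
qed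

lemma dyadic_layers_le_epowr:
  fixes y :: ennreal
  assumes "0 < s"
  shows "y * (\<integral>\<^sup>+j. ennreal (2 powr (of_int j * s)) * indicator {j. ennreal (2 powr of_int j) < y} j \<partial>count_space UNIV)
     \<le> ennreal (1 / (1 - 2 powr (-s))) * epowr y (s + 1)"
proof (cases y rule: ennreal_cases)
  case (real r)
  show ?thesis
  proof (cases "r = 0")
    case False
    with real have "0 < r" by simp
    have "0 < 1 - 2 powr (-s)" using assms powr_less_mono[of "-s" 0 "2::real"] by simp
    have "y * (\<integral>\<^sup>+j. ennreal (2 powr (of_int j * s)) * indicator {j. ennreal (2 powr of_int j) < y} j \<partial>count_space UNIV)
        \<le> ennreal r * ennreal (r powr s / (1 - 2 powr (-s)))"
      using dyadic_layers_below_le[OF \<open>0 < r\<close> assms] real by (simp add: ennreal_less_iff mult_left_mono)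
    also have "\<dots> = ennreal (1 / (1 - 2 powr (-s))) * ennreal (r powr (s + 1))"
      using \<open>0 < r\<close> \<open>0 < 1 - 2 powr (-s)\<close> by (simp add: powr_add ennreal_mult[symmetric] mult_ac)
    finally show ?thesis using real by (simp add: epowr_ennreal)
  qed (use real in simp)
qed (use assms powr_less_mono[of "-s" 0 "2::real"] in \<open>simp add: ennreal_mult_top\<close>)

lemma nn_integral_epowr_le_level_sets:
  fixes F :: "'a::topological_space \<Rightarrow> ennreal"
  assumes "sets M = sets borel" "F \<in> borel_measurable M" "0 < p"
  shows "(\<integral>\<^sup>+z. epowr (F z) p \<partial>M) \<le> ennreal (4 powr p) *
    (\<integral>\<^sup>+j. ennreal (2 powr (of_int j * p)) * emeasure M {z. 2 * ennreal (2 powr of_int j) < F z} \<partial>count_space UNIV)"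
proof -
  define c where "c j = ennreal (4 powr p) * ennreal (2 powr (of_int j * p))" for j :: int
  define L where "L j = {z. 2 * ennreal (2 powr of_int j) < F z}" for j :: int
  have L_sets: "L j \<in> sets M" for j unfolding L_def by (rule Collect_less_sets[OF assms(1,2)])
  have "(\<integral>\<^sup>+z. epowr (F z) p \<partial>M) \<le> (\<integral>\<^sup>+z. (\<integral>\<^sup>+j. c j * indicator (L j) z \<partial>count_space UNIV) \<partial>M)"
  proof (rule nn_integral_mono)
    fix z
    have "epowr (F z) p \<le> ennreal (4 powr p) * (\<integral>\<^sup>+j. ennreal (2 powr (of_int j * p))
        * indicator {j. 2 * ennreal (2 powr of_int j) < F z} j \<partial>count_space UNIV)"
      using assms(3) by (rule epowr_le_dyadic_layers)
    also have "\<dots> = (\<integral>\<^sup>+j. c j * indicator (L j) z \<partial>count_space UNIV)"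
      by (simp add: c_def L_def nn_integral_cmult indicator_def mult.assoc)
    finally show "epowr (F z) p \<le> \<dots>" .
  qed
  also have "\<dots> = (\<integral>\<^sup>+j. (\<integral>\<^sup>+z. c j * indicator (L j) z \<partial>M) \<partial>count_space UNIV)"
    using L_sets by (intro nn_integral_count_space_nn_integral) auto
  also have "\<dots> = ennreal (4 powr p) *
      (\<integral>\<^sup>+j. ennreal (2 powr (of_int j * p)) * emeasure M (L j) \<partial>count_space UNIV)"
    using L_sets by (simp add: c_def nn_integral_cmult_indicator nn_integral_cmult mult.assoc)
  finally show ?thesis unfolding L_def .
qed

lemma grid_maximal_strong_type:
  assumes grid: "nested_grid D" and sets_M: "sets M = sets borel" and g [measurable]: "g \<in> borel_measurable M"
    and "1 < p"
  shows "(\<integral>\<^sup>+z. epowr (grid_maximal D M 1 g z) p \<partial>M)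
    \<le> ennreal (4 powr p / (1 - 2 powr (1 - p))) * (\<integral>\<^sup>+z. epowr (g z) p \<partial>M)"
proof -
  define t where "t j = ennreal (2 powr of_int j)" for j :: int
  define w where "w j = ennreal (2 powr (of_int j * (p - 1)))" for j :: int
  define A where "A = ennreal (4 powr p)"
  define K where "K = ennreal (1 / (1 - 2 powr (-(p - 1))))"
  have "countable D" using grid unfolding nested_grid_def by blast
  note Mg = borel_measurable_grid_maximal[OF this sets_M, of M 1 g]
  have weight: "ennreal (2 powr (of_int j * p)) = w j * t j" for j
    by (simp add: w_def t_def ennreal_mult[symmetric] powr_add[symmetric] algebra_simps)
  have "(\<integral>\<^sup>+z. epowr (grid_maximal D M 1 g z) p \<partial>M)
      \<le> A * (\<integral>\<^sup>+j. ennreal (2 powr (of_int j * p)) * emeasure M {z. 2 * t j < grid_maximal D M 1 g z}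
          \<partial>count_space UNIV)"
    unfolding A_def t_def using \<open>1 < p\<close> by (intro nn_integral_epowr_le_level_sets[OF sets_M Mg]) simp
  also have "\<dots> = A * (\<integral>\<^sup>+j. w j * (t j * emeasure M {z. 2 * t j < grid_maximal D M 1 g z}) \<partial>count_space UNIV)"
    by (simp add: weight mult.assoc)
  also have "\<dots> \<le> A * (\<integral>\<^sup>+j. w j * (\<integral>\<^sup>+z. g z * indicator {z. t j < g z} z \<partial>M) \<partial>count_space UNIV)"
    using grid_maximal_level_set_le[OF grid sets_M g]
    by (intro mult_left_mono nn_integral_mono) auto
  also have "\<dots> = A * (\<integral>\<^sup>+j. (\<integral>\<^sup>+z. g z * (w j * indicator {j. t j < g z} j) \<partial>M) \<partial>count_space UNIV)"
    by (simp add: nn_integral_cmult[symmetric] indicator_def mult_ac)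
  also have "\<dots> = A * (\<integral>\<^sup>+z. g z * (\<integral>\<^sup>+j. w j * indicator {j. t j < g z} j \<partial>count_space UNIV) \<partial>M)"
    by (simp add: nn_integral_count_space_nn_integral[symmetric] nn_integral_cmult)
  also have "\<dots> \<le> A * (\<integral>\<^sup>+z. K * epowr (g z) p \<partial>M)"
    using dyadic_layers_le_epowr[of "p - 1"] \<open>1 < p\<close>
    by (intro mult_left_mono nn_integral_mono) (simp_all add: K_def w_def t_def)
  also have "\<dots> = A * K * (\<integral>\<^sup>+z. epowr (g z) p \<partial>M)"
    by (simp add: nn_integral_cmult mult.assoc)
  also have "A * K = ennreal (4 powr p / (1 - 2 powr (1 - p)))"
    unfolding A_def K_def using \<open>1 < p\<close> powr_less_mono[of "1 - p" 0 "2::real"]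
    by (subst ennreal_mult[symmetric]) (simp_all add: divide_inverse)
  finally show ?thesis .
qed

section \<open>The fractional maximal function\<close>

lemma Youngs_inequality_affine:
  fixes x m N p :: real
  assumes "0 \<le> x" "0 < m" "0 < N" "1 < p"
  shows "x \<le> m powr (1 - 1/p) * N powr (1/p) * (x powr p / (p * N) + (1 - 1/p) / m)"
proof -
  define p' where "p' = p / (p - 1)"
  have "1 < p'" "1/p + 1/p' = 1" using assms(4) unfolding p'_def by (simp_all add: field_simps)
  define A where "A = N powr (1/p)"
  define B where "B = m powr (1 - 1/p)"
  have "0 < A" "0 < B" unfolding A_def B_def using assms by simp_all
  have "(x / A) * (1 / B) \<le> (x / A) powr p / p + (1 / B) powr p' / p'"
    using \<open>0 < A\<close> \<open>0 < B\<close> assms(1,4) \<open>1 < p'\<close> \<open>1/p + 1/p' = 1\<close> by (intro Youngs_inequality) auto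
  also have "(x / A) powr p = x powr p / N"
    using assms unfolding A_def by (simp add: powr_divide powr_powr)
  also have "(1 / B) powr p' = 1 / m"
    using assms unfolding B_def p'_def by (simp add: powr_divide powr_powr field_simps)
  also have "1 / m / p' = (1 - 1/p) / m"
    using assms unfolding p'_def by (simp add: field_simps)
  finally have "x / A * (1 / B) \<le> x powr p / (p * N) + (1 - 1/p) / m" by (simp add: field_simps)
  then show ?thesis
    using \<open>0 < A\<close> \<open>0 < B\<close> unfolding A_def[symmetric] B_def[symmetric] by (simp add: field_simps)
qed

lemma set_nn_integral_le_Holder:
  fixes g :: "'a \<Rightarrow> real"
  assumes g: "g \<in> borel_measurable M" "\<And>x. 0 \<le> g x" and Q: "Q \<in> sets M"
    and m: "emeasure M Q = ennreal m" "0 < m"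
    and N: "(\<integral>\<^sup>+x. ennreal (g x powr p) \<partial>M) = ennreal N" "0 < N" and "1 < p"
  shows "(\<integral>\<^sup>+x\<in>Q. ennreal (g x) \<partial>M) \<le> ennreal (m powr (1 - 1/p) * N powr (1/p))"
proof -
  define C where "C = m powr (1 - 1/p) * N powr (1/p)"
  define a where "a = C / (p * N)"
  define b where "b = C * (1 - 1/p) / m"
  have "0 < C" unfolding C_def using m N by simp
  then have "0 \<le> a" "0 \<le> b" unfolding a_def b_def using m N \<open>1 < p\<close> by simp_all
  have "(\<integral>\<^sup>+x\<in>Q. ennreal (g x) \<partial>M)
      \<le> (\<integral>\<^sup>+x. ennreal a * (ennreal (g x powr p) * indicator Q x) + ennreal b * indicator Q x \<partial>M)"
  proof (rule nn_integral_mono)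
    fix x
    have "g x \<le> a * g x powr p + b"
      using Youngs_inequality_affine[OF g(2) m(2) N(2) \<open>1 < p\<close>] unfolding a_def b_def C_def
      by (simp add: field_simps)
    then have "ennreal (g x) \<le> ennreal (a * g x powr p) + ennreal b"
      using \<open>0 \<le> a\<close> \<open>0 \<le> b\<close> by (simp flip: ennreal_plus)
    then show "ennreal (g x) * indicator Q x
        \<le> ennreal a * (ennreal (g x powr p) * indicator Q x) + ennreal b * indicator Q x"
      using \<open>0 \<le> a\<close> by (simp add: indicator_def ennreal_mult)
  qed
  also have "\<dots> = ennreal a * (\<integral>\<^sup>+x\<in>Q. ennreal (g x powr p) \<partial>M) + ennreal b * emeasure M Q"
    using g(1) Q by (simp add: nn_integral_add nn_integral_cmult nn_integral_cmult_indicator)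
  also have "\<dots> \<le> ennreal a * ennreal N + ennreal b * ennreal m"
  proof (intro add_mono mult_left_mono)
    have "(\<integral>\<^sup>+x\<in>Q. ennreal (g x powr p) \<partial>M) \<le> (\<integral>\<^sup>+x. ennreal (g x powr p) \<partial>M)"
      by (intro nn_integral_mono) (simp add: indicator_def)
    then show "(\<integral>\<^sup>+x\<in>Q. ennreal (g x powr p) \<partial>M) \<le> ennreal N" by (simp only: N(1))
  qed (simp_all add: m(1))
  also have "\<dots> = ennreal (a * N + b * m)"
    using \<open>0 \<le> a\<close> \<open>0 \<le> b\<close> m(2) N(2) by (simp add: ennreal_mult ennreal_plus)
  also have "a * N + b * m = C"
    unfolding a_def b_def using m(2) N(2) \<open>1 < p\<close> by (simp add: field_simps)
  finally show ?thesis unfolding C_def .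
qed

lemma divide_powr_interpolation_le:
  fixes a m N s e p :: real
  assumes "0 < a" "0 < m" "0 < N" and bound: "a \<le> m powr (1 - 1/p) * N"
    and "0 < s" "s \<le> 1" and e: "e = (1 - 1/p) * (1 - s) + s"
  shows "a / m powr e \<le> (a / m) powr s * N powr (1 - s)"
proof -
  have "a powr (1 - s) \<le> (m powr (1 - 1/p) * N) powr (1 - s)"
    using assms by (intro powr_mono2) auto
  also have "\<dots> = m powr ((1 - 1/p) * (1 - s)) * N powr (1 - s)"
    using assms by (simp add: powr_mult powr_powr)
  finally have "a powr s * a powr (1 - s) * m powr (- e)
      \<le> a powr s * (m powr ((1 - 1/p) * (1 - s)) * N powr (1 - s)) * m powr (- e)"
    using assms by (intro mult_right_mono mult_left_mono) auto
  also have "\<dots> = a powr s * m powr ((1 - 1/p) * (1 - s) - e) * N powr (1 - s)"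
    by (simp add: powr_add[symmetric] mult_ac)
  also have "(1 - 1/p) * (1 - s) - e = - s" using e by simp
  also have "a powr s * m powr (- s) = (a / m) powr s"
    using assms by (simp add: powr_divide powr_minus_divide)
  also have "a powr s * a powr (1 - s) * m powr (- e) = a / m powr e"
    using assms(1,2) by (simp add: powr_minus_divide flip: powr_add)
  finally show ?thesis .
qed

lemma set_average_interpolation_le:
  fixes g :: "'a \<Rightarrow> real"
  assumes g: "g \<in> borel_measurable M" "\<And>x. 0 \<le> g x" and Q: "Q \<in> sets M"
    and N: "(\<integral>\<^sup>+x. ennreal (g x powr p) \<partial>M) = ennreal N" "0 < N" and "1 < p"
    and s: "0 < s" "s \<le> 1" and e: "e = (1 - 1/p) * (1 - s) + s"
  shows "(\<integral>\<^sup>+x\<in>Q. ennreal (g x) \<partial>M) / epowr (emeasure M Q) e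
    \<le> epowr ((\<integral>\<^sup>+x\<in>Q. ennreal (g x) \<partial>M) / emeasure M Q) s * ennreal ((N powr (1/p)) powr (1 - s))"
proof (cases "emeasure M Q" rule: ennreal_cases)
  case (real m)
  then have mQ: "emeasure M Q = ennreal m" and "0 \<le> m" by simp_all
  show ?thesis
  proof (cases "m = 0")
    case True
    with real Q have "(\<integral>\<^sup>+x\<in>Q. ennreal (g x) \<partial>M) = 0"
      by (intro nn_integral_null_set) (simp add: null_sets_def)
    then show ?thesis by simp
  next
    case False
    with real have "0 < m" by simp
    have Holder: "(\<integral>\<^sup>+x\<in>Q. ennreal (g x) \<partial>M) \<le> ennreal (m powr (1 - 1/p) * N powr (1/p))"
      by (rule set_nn_integral_le_Holder[OF g Q mQ \<open>0 < m\<close> N \<open>1 < p\<close>])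
    then obtain a where a: "(\<integral>\<^sup>+x\<in>Q. ennreal (g x) \<partial>M) = ennreal a" "0 \<le> a"
      by (cases "(\<integral>\<^sup>+x\<in>Q. ennreal (g x) \<partial>M)" rule: ennreal_cases) (auto simp: top_unique)
    show ?thesis
    proof (cases "a = 0")
      case False
      with a have "0 < a" by simp
      have "a \<le> m powr (1 - 1/p) * N powr (1/p)"
        using Holder a \<open>0 < m\<close> N(2) by (simp add: ennreal_le_iff)
      from divide_powr_interpolation_le[OF \<open>0 < a\<close> \<open>0 < m\<close> _ this s e] N(2)
      have "a / m powr e \<le> (a / m) powr s * (N powr (1/p)) powr (1 - s)" by simp
      then have "ennreal (a / m powr e) \<le> ennreal ((a / m) powr s) * ennreal ((N powr (1/p)) powr (1 - s))"
        by (simp add: ennreal_leI flip: ennreal_mult)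
      then show ?thesis
        using mQ a \<open>0 < a\<close> \<open>0 < m\<close> by (simp add: epowr_ennreal divide_ennreal)
    qed (simp add: a)
  qed
qed simp

lemma grid_maximal_interpolation_le:
  fixes g :: "complex \<Rightarrow> real"
  assumes sets_M: "sets M = sets borel" and g: "g \<in> borel_measurable M" "\<And>x. 0 \<le> g x"
    and N: "(\<integral>\<^sup>+x. ennreal (g x powr p) \<partial>M) = ennreal N" "0 < N" and "1 < p"
    and s: "0 < s" "s \<le> 1" and e: "e = (1 - 1/p) * (1 - s) + s"
  shows "grid_maximal D M e (\<lambda>x. ennreal (g x)) z
    \<le> epowr (grid_maximal D M 1 (\<lambda>x. ennreal (g x)) z) s * ennreal ((N powr (1/p)) powr (1 - s))"
  unfolding grid_maximal_def[of D M e]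
proof (rule SUP_least)
  fix I assume I: "I \<in> {I \<in> D. z \<in> box I}"
  have "box I \<in> sets M" unfolding sets_M by simp
  from set_average_interpolation_le[OF g this N \<open>1 < p\<close> s e]
  have "box_average M e (\<lambda>x. ennreal (g x)) I
      \<le> epowr (box_average M 1 (\<lambda>x. ennreal (g x)) I) s * ennreal ((N powr (1/p)) powr (1 - s))"
    unfolding box_average_def by simp
  also have "\<dots> \<le> epowr (grid_maximal D M 1 (\<lambda>x. ennreal (g x)) z) s * ennreal ((N powr (1/p)) powr (1 - s))"
    using I s unfolding grid_maximal_def by (intro mult_right_mono epowr_mono SUP_upper) auto
  finally show "box_average M e (\<lambda>x. ennreal (g x)) I \<le> \<dots>" .
qed

lemma grid_maximal_eq_0_if_nn_integral_powr_eq_0: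
  fixes g :: "complex \<Rightarrow> real"
  assumes "sets M = sets borel" "g \<in> borel_measurable M" "\<And>x. 0 \<le> g x"
    and "(\<integral>\<^sup>+x. ennreal (g x powr p) \<partial>M) = 0"
  shows "grid_maximal D M e (\<lambda>x. ennreal (g x)) z = 0"
proof -
  have g' [measurable]: "(\<lambda>x. ennreal (g x)) \<in> borel_measurable M" using assms(2) by measurable
  have "(\<lambda>x. ennreal (g x powr p)) \<in> borel_measurable M" using assms(2) by measurable
  with assms(4) have "AE x in M. ennreal (g x powr p) = 0"
    using nn_integral_0_iff_AE by fastforce
  then have zero: "AE x in M. ennreal (g x) = 0"
    by eventually_elim (use assms(3) in auto)
  have "(\<integral>\<^sup>+x\<in>box I. ennreal (g x) \<partial>M) = 0" for I
  proof -
    have "box I \<in> sets M" using assms(1) by simp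
    with zero show ?thesis by (subst nn_integral_0_iff_AE) auto
  qed
  then show ?thesis unfolding grid_maximal_def box_average_def by (intro antisym SUP_least) auto
qed

lemma epowr_grid_maximal_interpolation_le:
  fixes g :: "complex \<Rightarrow> real"
  assumes sets_M: "sets M = sets borel" and g: "g \<in> borel_measurable M" "\<And>x. 0 \<le> g x"
    and N: "(\<integral>\<^sup>+x. ennreal (g x powr p) \<partial>M) = ennreal N" "0 < N" and "1 < p"
    and s: "0 < s" "s \<le> 1" and e: "e = (1 - 1/p) * (1 - s) + s" and q: "s * q = p"
  shows "epowr (grid_maximal D M e (\<lambda>x. ennreal (g x)) z) q
    \<le> epowr (grid_maximal D M 1 (\<lambda>x. ennreal (g x)) z) p * ennreal (N powr (q / p - 1))"
proof -
  let ?Mg = "grid_maximal D M 1 (\<lambda>x. ennreal (g x)) z"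
  have "0 < s * q" using q \<open>1 < p\<close> by simp
  then have "0 < q" using zero_less_mult_pos s(1) by blast
  have "epowr (grid_maximal D M e (\<lambda>x. ennreal (g x)) z) q
      \<le> epowr (epowr ?Mg s * ennreal ((N powr (1/p)) powr (1 - s))) q"
    using grid_maximal_interpolation_le[OF sets_M g N \<open>1 < p\<close> s e] \<open>0 < q\<close>
    by (intro epowr_mono) simp_all
  also have "\<dots> = epowr ?Mg p * ennreal (((N powr (1/p)) powr (1 - s)) powr q)"
    using N(2) \<open>0 < q\<close> q by (simp add: epowr_mult_ennreal epowr_epowr)
  also have "((N powr (1/p)) powr (1 - s)) powr q = N powr (q / p - 1)"
    using q \<open>1 < p\<close> by (simp add: powr_powr field_simps)
  finally show ?thesis .
qed

lemma grid_maximal_fractional_integral_le: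
  fixes g :: "complex \<Rightarrow> real"
  assumes grid: "nested_grid D" and sets_M: "sets M = sets borel"
    and g: "g \<in> borel_measurable M" "\<And>x. 0 \<le> g x"
    and N: "(\<integral>\<^sup>+x. ennreal (g x powr p) \<partial>M) = ennreal N" "0 < N" and "1 < p"
    and s: "0 < s" "s \<le> 1" and e: "e = (1 - 1/p) * (1 - s) + s" and q: "s * q = p"
  shows "(\<integral>\<^sup>+z. epowr (grid_maximal D M e (\<lambda>x. ennreal (g x)) z) q \<partial>M)
    \<le> ennreal (4 powr p / (1 - 2 powr (1 - p)) * N powr (q / p))"
proof -
  define K where "K = 4 powr p / (1 - 2 powr (1 - p))"
  have "0 \<le> K" unfolding K_def using \<open>1 < p\<close> powr_less_mono[of "1 - p" 0 "2::real"] by simp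
  let ?g = "\<lambda>x. ennreal (g x)"
  have g' [measurable]: "?g \<in> borel_measurable M" using g(1) by measurable
  have "countable D" using grid unfolding nested_grid_def by blast
  note maximal_measurable = borel_measurable_grid_maximal[OF this sets_M]
  have "(\<integral>\<^sup>+z. epowr (grid_maximal D M e ?g z) q \<partial>M)
      \<le> (\<integral>\<^sup>+z. epowr (grid_maximal D M 1 ?g z) p * ennreal (N powr (q / p - 1)) \<partial>M)"
    using epowr_grid_maximal_interpolation_le[OF sets_M g N \<open>1 < p\<close> s e q] by (intro nn_integral_mono)
  also have "\<dots> = (\<integral>\<^sup>+z. epowr (grid_maximal D M 1 ?g z) p \<partial>M) * ennreal (N powr (q / p - 1))"
    using maximal_measurable by (intro nn_integral_multc) measurable
  also have "\<dots> \<le> ennreal K * ennreal N * ennreal (N powr (q / p - 1))"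
    using grid_maximal_strong_type[OF grid sets_M g' \<open>1 < p\<close>, folded K_def] N(1) g(2)
    by (intro mult_right_mono) (simp_all add: epowr_ennreal)
  also have "\<dots> = ennreal (K * (N * N powr (q / p - 1)))"
    using \<open>0 \<le> K\<close> N(2) by (simp add: ennreal_mult mult.assoc)
  also have "N * N powr (q / p - 1) = N powr (q / p)"
    using N(2) by (simp add: powr_diff)
  finally show ?thesis unfolding K_def .
qed

lemma grid_maximal_fractional_strong_type:
  fixes g :: "complex \<Rightarrow> real"
  assumes grid: "nested_grid D" and sets_M: "sets M = sets borel"
    and g: "g \<in> borel_measurable M" "\<And>x. 0 \<le> g x"
    and "1 < p" "0 \<le> \<theta>" "\<theta> * p < 1" and q: "1 / q = 1 / p - \<theta>"
  shows "epowr (\<integral>\<^sup>+z. epowr (grid_maximal D M (1 - \<theta>) (\<lambda>x. ennreal (g x)) z) q \<partial>M) (1 / q)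
    \<le> ennreal ((4 powr p / (1 - 2 powr (1 - p))) powr (1 / q))
       * epowr (\<integral>\<^sup>+z. ennreal (g z powr p) \<partial>M) (1 / p)"
proof -
  define K where "K = 4 powr p / (1 - 2 powr (1 - p))"
  define s where "s = p / q"
  have "0 < K"
    unfolding K_def using \<open>1 < p\<close> powr_less_mono[of "1 - p" 0 "2::real"] by simp
  have "\<theta> < 1 / p" using \<open>\<theta> * p < 1\<close> \<open>1 < p\<close> by (simp add: field_simps)
  then have "0 < q" using q by (metis diff_gt_0_iff_gt zero_less_divide_1_iff)
  have s_eq: "s = 1 - p * \<theta>" unfolding s_def using q \<open>1 < p\<close> \<open>0 < q\<close> by (simp add: field_simps)
  then have s: "0 < s" "s \<le> 1" using \<open>\<theta> * p < 1\<close> \<open>0 \<le> \<theta>\<close> \<open>1 < p\<close> by (simp_all add: mult.commute)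
  have e: "1 - \<theta> = (1 - 1/p) * (1 - s) + s" unfolding s_eq using \<open>1 < p\<close> by (simp add: field_simps)
  have "s * q = p" unfolding s_def using \<open>0 < q\<close> by simp
  show ?thesis
  proof (cases "\<integral>\<^sup>+z. ennreal (g z powr p) \<partial>M" rule: ennreal_cases)
    case top
    with \<open>0 < K\<close> \<open>1 < p\<close> show ?thesis by (simp add: K_def ennreal_mult_top)
  next
    case (real N)
    show ?thesis
    proof (cases "N = 0")
      case True
      with real show ?thesis
        by (simp add: grid_maximal_eq_0_if_nn_integral_powr_eq_0[OF sets_M g])
    next
      case False
      with real have N: "(\<integral>\<^sup>+z. ennreal (g z powr p) \<partial>M) = ennreal N" "0 < N" by simp_all
      have "epowr (\<integral>\<^sup>+z. epowr (grid_maximal D M (1 - \<theta>) (\<lambda>x. ennreal (g x)) z) q \<partial>M) (1 / q)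
          \<le> epowr (ennreal (K * N powr (q / p))) (1 / q)"
        using grid_maximal_fractional_integral_le[OF grid sets_M g N \<open>1 < p\<close> s e \<open>s * q = p\<close>]
          \<open>0 < q\<close> unfolding K_def by (intro epowr_mono) simp_all
      also have "\<dots> = ennreal ((K * N powr (q / p)) powr (1 / q))"
        using \<open>0 < K\<close> N(2) by (intro epowr_ennreal) simp
      also have "\<dots> = ennreal (K powr (1 / q)) * epowr (ennreal N) (1 / p)"
        using \<open>0 < K\<close> N(2) \<open>0 < q\<close>
        by (simp add: epowr_ennreal powr_mult powr_powr ennreal_mult)
      finally show ?thesis unfolding K_def N(1) .
    qed
  qed
qed

section \<open>The weighted measure \<open>\<sigma> dV\<^sub>\<alpha>\<close>\<close>

definition weighted_measure :: "real \<Rightarrow> (complex \<Rightarrow> real) \<Rightarrow> complex measure" where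
  "weighted_measure \<alpha> \<sigma> = density lborel (\<lambda>z. wdens \<alpha> \<sigma> z * indicator UHP z)"

lemma sets_weighted_measure [simp]: "sets (weighted_measure \<alpha> \<sigma>) = sets borel"
  unfolding weighted_measure_def by simp

lemma borel_measurable_wdens [measurable]:
  assumes [measurable]: "\<sigma> \<in> borel_measurable borel"
  shows "wdens \<alpha> \<sigma> \<in> borel_measurable borel"
  unfolding wdens_def by measurable

lemma UHP_sets [measurable]: "UHP \<in> sets borel"
  unfolding UHP_def by measurable

lemma nn_integral_weighted_measure:
  assumes [measurable]: "\<sigma> \<in> borel_measurable borel" "F \<in> borel_measurable borel"
  shows "(\<integral>\<^sup>+z. F z \<partial>weighted_measure \<alpha> \<sigma>) = (\<integral>\<^sup>+z\<in>UHP. F z * wdens \<alpha> \<sigma> z \<partial>lborel)"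
  unfolding weighted_measure_def
  by (subst nn_integral_density) (auto intro!: nn_integral_cong simp: mult_ac)

lemma dmax_eq_grid_maximal:
  assumes [measurable]: "\<sigma> \<in> borel_measurable borel" "f \<in> borel_measurable borel"
  shows "dmax \<beta> \<sigma> \<alpha> \<gamma> f z
    = grid_maximal (dyadic \<beta>) (weighted_measure \<alpha> \<sigma>) (1 - \<gamma> / (2 + \<alpha>)) (\<lambda>x. ennreal (norm (f x))) z"
proof -
  have "(\<integral>\<^sup>+x\<in>box I. ennreal (norm (f x)) \<partial>weighted_measure \<alpha> \<sigma>)
      = (\<integral>\<^sup>+x\<in>box I. ennreal (norm (f x)) * wdens \<alpha> \<sigma> x \<partial>lborel)" for I
    using box_subset_UHP[of I] by (subst nn_integral_weighted_measure) (auto intro!: nn_integral_cong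
        split: split_indicator)
  moreover have "emeasure (weighted_measure \<alpha> \<sigma>) (box I) = wmeas \<alpha> \<sigma> (box I)" for I
    using box_subset_UHP[of I] unfolding weighted_measure_def wmeas_def
    by (subst emeasure_density) (auto intro!: nn_integral_cong split: split_indicator)
  ultimately show ?thesis
    unfolding dmax_def grid_maximal_def box_average_def by simp
qed

lemma dmax_fractional_strong_type:
  fixes f :: "complex \<Rightarrow> complex"
  assumes "\<beta> = 0 \<or> \<beta> = 1/3" and [measurable]: "\<sigma> \<in> borel_measurable borel" "f \<in> borel_measurable borel"
    and "1 < p" "0 \<le> \<gamma> / (2 + \<alpha>)" "\<gamma> / (2 + \<alpha>) * p < 1" "1 / q = 1 / p - \<gamma> / (2 + \<alpha>)"
  shows "epowr (\<integral>\<^sup>+ z\<in>UHP. epowr (dmax \<beta> \<sigma> \<alpha> \<gamma> f z) q * wdens \<alpha> \<sigma> z \<partial>lborel) (1 / q)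
    \<le> ennreal ((4 powr p / (1 - 2 powr (1 - p))) powr (1 / q))
      * epowr (\<integral>\<^sup>+ z\<in>UHP. ennreal (norm (f z) powr p) * wdens \<alpha> \<sigma> z \<partial>lborel) (1 / p)"
proof -
  let ?W = "weighted_measure \<alpha> \<sigma>"
  let ?Mf = "grid_maximal (dyadic \<beta>) ?W (1 - \<gamma> / (2 + \<alpha>)) (\<lambda>x. ennreal (norm (f x)))"
  have grid: "nested_grid (dyadic \<beta>)" using assms(1) by (rule nested_grid_dyadic)
  have norm_f: "(\<lambda>x. norm (f x)) \<in> borel_measurable ?W"
    unfolding measurable_cong_sets[OF sets_weighted_measure refl] by measurable
  have "?Mf \<in> borel_measurable borel"
    using grid unfolding nested_grid_def by (intro borel_measurable_grid_maximal) auto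
  then have "(\<integral>\<^sup>+ z\<in>UHP. epowr (dmax \<beta> \<sigma> \<alpha> \<gamma> f z) q * wdens \<alpha> \<sigma> z \<partial>lborel)
      = (\<integral>\<^sup>+z. epowr (?Mf z) q \<partial>?W)"
    by (simp add: dmax_eq_grid_maximal nn_integral_weighted_measure)
  moreover have "(\<integral>\<^sup>+ z\<in>UHP. ennreal (norm (f z) powr p) * wdens \<alpha> \<sigma> z \<partial>lborel)
      = (\<integral>\<^sup>+z. ennreal (norm (f z) powr p) \<partial>?W)"
    by (simp add: nn_integral_weighted_measure)
  ultimately show ?thesis
    using grid_maximal_fractional_strong_type[OF grid sets_weighted_measure norm_f norm_ge_zero
        assms(4-7)]
    by simp
qed

theorem corollary4p3:
  fixes \<alpha> \<gamma> p q :: real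
  assumes "\<alpha> > -1" and "0 \<le> \<gamma>" and "\<gamma> < 2 + \<alpha>"
    and "1 < p" and "\<gamma> = 0 \<or> p < (2 + \<alpha>) / \<gamma>"
    and "1 / p - 1 / q = \<gamma> / (2 + \<alpha>)"
  shows "\<exists>C::real. \<forall>\<beta> \<in> {0, 1/3}. \<forall>\<sigma>. weight \<sigma> \<longrightarrow>
           (\<forall>f \<in> borel_measurable lborel.
              epowr (\<integral>\<^sup>+ z\<in>UHP. epowr (dmax \<beta> \<sigma> \<alpha> \<gamma> f z) q * wdens \<alpha> \<sigma> z \<partial>lborel) (1 / q)
              \<le> ennreal C * epowr (\<integral>\<^sup>+ z\<in>UHP. ennreal (norm (f z) powr p) * wdens \<alpha> \<sigma> z \<partial>lborel) (1 / p))"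
proof -
  have "0 < 2 + \<alpha>" using assms(1) by simp
  have "\<gamma> / (2 + \<alpha>) * p < 1"
  proof (cases "\<gamma> = 0")
    case False
    with assms(2,5) \<open>0 < 2 + \<alpha>\<close> have "p * \<gamma> < 2 + \<alpha>" by (simp add: field_simps)
    with \<open>0 < 2 + \<alpha>\<close> show ?thesis by (simp add: field_simps)
  qed simp
  moreover have "0 \<le> \<gamma> / (2 + \<alpha>)" "1 / q = 1 / p - \<gamma> / (2 + \<alpha>)"
    using assms(2,6) \<open>0 < 2 + \<alpha>\<close> by simp_all
  ultimately show ?thesis
    using \<open>1 < p\<close>
    by (intro exI[of _ "(4 powr p / (1 - 2 powr (1 - p))) powr (1 / q)"] ballI allI impI
        dmax_fractional_strong_type) (auto simp: weight_def)
qed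

end
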